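(* Let $m\ge 2$ be the number of registers of a HyperLogLog sketch into which $n$ distinct elements have been inserted, and suppose $n>4m\log_2 m$. Let $B=\log_2\frac{n}{m}$ and $\Delta=2+\log_2\log_2 m$. Then with probability at least $1-\exp\!\left(-\frac{m}{6\log_2 m}\right)$, at least $m-\frac{m}{\log_2 m}$ of the register values $M[j]$ lie in $(B-\Delta,B+\Delta)$, and hence can be represented as offsets from the base value $B$ using at most $\lceil\log_2(2+\log_2\log_2 m)\rceil+1=\log\log\log m+O(1)$ bits each.
   Context: HyperLogLog model: each of $n$ distinct elements $y_i$ is assigned a register index $f(y_i)$ uniform in $[m]=\{1,\dots,m\}$ and a value $\rho_i$ with $\Pr[\rho_i=k]=2^{-k}$, $k=1,2,\dots$ (the position of the first one-bit of a uniformly random hash value), all independent; register $M[j]$ is the maximum of $\rho_i$ over elements with $f(y_i)=j$ (0 if none), so $\Pr[M[j]\le k]=(1-\frac{1}{m2^k})^n$ for integers $k\ge0$. Convention: register values are treated as real-valued continuous random variables whose individual distribution function is $\Pr[M[j]\le t]=\Pr[M[j]<t]=(1-\frac{1}{m2^t})^n$ for real $t$. All logarithms are base 2. *)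

theory Defs
  imports "HOL-Probability.Probability"
begin

text \<open>Registers are indexed by 0..<m (instead of 1..m),
  elements by 0..<n. Each element independently gets a pair (f, rho) where
  f is uniform on {0..<m} and Pr[rho = k] = 2^(-k) for k = 1,2,...\<close>

definition rho_pmf :: "nat pmf" where
  "rho_pmf = map_pmf Suc (geometric_pmf (1/2))"

definition hll_elem_pmf :: "nat \<Rightarrow> (nat \<times> nat) pmf" where
  "hll_elem_pmf m = pair_pmf (pmf_of_set {..<m}) rho_pmf"

definition hll_pmf :: "nat \<Rightarrow> nat \<Rightarrow> (nat \<Rightarrow> nat \<times> nat) pmf" where
  "hll_pmf m n = Pi_pmf {..<n} (0, 0) (\<lambda>_. hll_elem_pmf m)"

definition hll_reg :: "nat \<Rightarrow> (nat \<Rightarrow> nat \<times> nat) \<Rightarrow> nat \<Rightarrow> nat" where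
  "hll_reg n \<omega> j = Max ({snd (\<omega> i) | i. i < n \<and> fst (\<omega> i) = j} \<union> {0})"

end

theory Submission
  imports Defs "HOL-Analysis.Harmonic_Numbers"
begin

(*
  Let c = B + \<Delta> and d = B - \<Delta>. A register outside (d, c) either has value at least c,
  and then holds an element with rho >= c, or has value at most d. So the number of such
  registers is at most H + L, where H counts the elements with rho >= c and L the registers
  with value <= d. Now 2^(H + L) is at most the sum, over all sets S of registers, of the
  products over all elements of w_S = 2^[rho >= c] * [not (the element hashes into S and
  rho > d)]. By independence each product has expectation (E w_S)^n, and summing over S gives
  E 2^(H + L) <= exp (n 2^(1 - c)) (1 + exp (- n 2^(-d) / m))^m. Markov's inequality at level
  m / log m bounds the failure probability by
  exp (m / (2 log m) + m exp (- 4 log m) - (m / log m) ln 2) <= exp (- m / (6 log m)).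
  The bound on the number of offsets counts the integers in an open interval of length 2 \<Delta>.
*)

lemma prob_geometric_pmf_ge:
  assumes "0 < p" "p \<le> 1"
  shows "measure_pmf.prob (geometric_pmf p) {k. j \<le> k} = (1 - p) ^ j"
proof -
  have partial_sum: "(\<Sum>k<j. (1 - p) ^ k * p) = 1 - (1 - p) ^ j"
    by (induction j) (auto simp: algebra_simps)
  have "{k. j \<le> k} = UNIV - {..<j}" by auto
  then have "measure_pmf.prob (geometric_pmf p) {k. j \<le> k}
      = 1 - measure_pmf.prob (geometric_pmf p) {..<j}"
    using measure_pmf.prob_compl[of "{..<j}" "geometric_pmf p"] by simp
  also have "\<dots> = (1 - p) ^ j"
    using assms by (simp add: measure_measure_pmf_finite partial_sum)
  finally show ?thesis .
qed

lemma prob_rho_pmf_ge_Suc: "measure_pmf.prob rho_pmf {r. Suc j \<le> r} = (1/2 :: real) ^ j"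
proof -
  have "Suc -` {r. Suc j \<le> r} = {k. j \<le> k}" by auto
  then show ?thesis
    unfolding rho_pmf_def by (simp add: prob_geometric_pmf_ge)
qed

lemma prob_rho_pmf_ge_le:
  assumes "c > 0"
  shows "measure_pmf.prob rho_pmf {r. c \<le> real r} \<le> 2 powr (1 - c)"
proof -
  define K where "K = nat (\<lceil>c\<rceil> - 1)"
  have K: "real K = of_int \<lceil>c\<rceil> - 1"
    using assms unfolding K_def by (simp add: one_le_ceiling)
  have "c \<le> real r \<longleftrightarrow> Suc K \<le> r" for r
    using ceiling_le_iff[of c "int r"] assms unfolding K_def by linarith
  then have "{r. c \<le> real r} = {r. Suc K \<le> r}" by auto
  then have "measure_pmf.prob rho_pmf {r. c \<le> real r} = 2 powr (- real K)"
    by (simp add: prob_rho_pmf_ge_Suc powr_minus powr_realpow power_divide inverse_eq_divide)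
  also have "\<dots> \<le> 2 powr (1 - c)"
    using K le_of_int_ceiling[of c] by (intro powr_mono) auto
  finally show ?thesis .
qed

lemma prob_rho_pmf_gt_ge:
  assumes "d \<ge> 0"
  shows "measure_pmf.prob rho_pmf {r. d < real r} \<ge> 2 powr (- d)"
proof -
  define K where "K = nat \<lfloor>d\<rfloor>"
  have K: "real K = of_int \<lfloor>d\<rfloor>"
    using assms unfolding K_def by simp
  have "{r. d < real r} = {r. Suc K \<le> r}"
    using assms unfolding K_def by (auto simp: floor_less_iff[symmetric]) linarith+
  then have "measure_pmf.prob rho_pmf {r. d < real r} = 2 powr (- real K)"
    by (simp add: prob_rho_pmf_ge_Suc powr_minus powr_realpow power_divide inverse_eq_divide)
  moreover have "2 powr (- d) \<le> 2 powr (- real K)"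
    using K by (intro powr_mono) auto
  ultimately show ?thesis by simp
qed

definition hll_weight :: "real \<Rightarrow> real \<Rightarrow> nat set \<Rightarrow> nat \<times> nat \<Rightarrow> real" where
  "hll_weight c d S x =
     (if c \<le> real (snd x) then 2 else 1) * (if fst x \<in> S \<and> d < real (snd x) then 0 else 1)"

lemma hll_weight_nonneg: "hll_weight c d S x \<ge> 0"
  by (simp add: hll_weight_def)

lemma integrable_hll_weight: "integrable (measure_pmf p) (hll_weight c d S)"
  by (intro measure_pmf.integrable_const_bound[where B = 2]) (auto simp: hll_weight_def)

lemma prob_hll_elem_pmf_Times:
  assumes "S \<subseteq> {..<m}" "m > 0"
  shows "measure_pmf.prob (hll_elem_pmf m) (S \<times> R)
           = real (card S) / real m * measure_pmf.prob rho_pmf R"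
proof -
  have "measure_pmf.prob (pmf_of_set {..<m}) S = real (card S) / real m"
    using assms measure_pmf_of_set[of "{..<m}" S] by (auto simp: Int_absorb1)
  moreover have "countable S"
    using assms(1) by (simp add: countable_finite finite_subset)
  ultimately show ?thesis
    unfolding hll_elem_pmf_def by (subst measure_pmf_prob_product) auto
qed

lemma expectation_hll_weight_le:
  assumes "S \<subseteq> {..<m}" "m > 0" "c > 0" "d \<ge> 0"
  shows "measure_pmf.expectation (hll_elem_pmf m) (hll_weight c d S)
           \<le> 1 + 2 powr (1 - c) - real (card S) / real m * 2 powr (- d)"
proof -
  let ?M = "measure_pmf (hll_elem_pmf m)"
  define High where "High = (UNIV :: nat set) \<times> {r. c \<le> real r}"
  define Hit where "Hit = S \<times> {r. d < real r}"
  have "hll_weight c d S x \<le> 1 + indicator High x - indicator Hit x" for x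
    by (cases x) (auto simp: hll_weight_def High_def Hit_def indicator_def)
  then have "measure_pmf.expectation (hll_elem_pmf m) (hll_weight c d S)
      \<le> measure_pmf.expectation (hll_elem_pmf m) (\<lambda>x. 1 + indicator High x - indicator Hit x)"
    by (intro integral_mono integrable_hll_weight)
       (auto simp: less_top[symmetric])
  also have "\<dots> = 1 + measure ?M High - measure ?M Hit"
    by (simp add: less_top[symmetric] Bochner_Integration.integral_diff
        Bochner_Integration.integral_add)
  also have "measure ?M High = measure_pmf.prob rho_pmf {r. c \<le> real r}"
    unfolding High_def hll_elem_pmf_def by (subst measure_pmf_prob_product) auto
  also have "measure ?M Hit = real (card S) / real m * measure_pmf.prob rho_pmf {r. d < real r}"
    unfolding Hit_def using assms(1,2) by (rule prob_hll_elem_pmf_Times)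
  finally show ?thesis
    using prob_rho_pmf_ge_le[OF assms(3)]
      mult_left_mono[OF prob_rho_pmf_gt_ge[OF assms(4)], of "real (card S) / real m"]
    by simp
qed

lemma expectation_prod_hll_weight_le:
  assumes "S \<subseteq> {..<m}" "m > 0" "c > 0" "d \<ge> 0"
  shows "measure_pmf.expectation (hll_pmf m n) (\<lambda>\<omega>. \<Prod>i<n. hll_weight c d S (\<omega> i))
           \<le> exp (real n * 2 powr (1 - c)) * exp (- (real n * 2 powr (- d) / real m)) ^ card S"
proof -
  let ?E = "measure_pmf.expectation (hll_elem_pmf m) (hll_weight c d S)"
  let ?x = "2 powr (1 - c) - real (card S) / real m * 2 powr (- d)"
  have "measure_pmf.expectation (hll_pmf m n) (\<lambda>\<omega>. \<Prod>i<n. hll_weight c d S (\<omega> i)) = ?E ^ n"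
    unfolding hll_pmf_def
    by (subst expectation_prod_Pi_pmf) (auto simp: integrable_hll_weight hll_weight_nonneg)
  also have "\<dots> \<le> exp ?x ^ n"
  proof (rule power_mono)
    show "?E \<le> exp ?x"
      using expectation_hll_weight_le[OF assms] exp_ge_add_one_self[of ?x] by linarith
  qed (simp add: hll_weight_nonneg)
  also have "\<dots> = exp (real n * 2 powr (1 - c)) * exp (- (real n * 2 powr (- d) / real m)) ^ card S"
    by (simp add: exp_of_nat_mult[symmetric] exp_add[symmetric] algebra_simps)
  finally show ?thesis .
qed

definition hll_potential :: "nat \<Rightarrow> nat \<Rightarrow> real \<Rightarrow> real \<Rightarrow> (nat \<Rightarrow> nat \<times> nat) \<Rightarrow> real" where
  "hll_potential m n c d \<omega> = (\<Sum>S\<in>Pow {..<m}. \<Prod>i<n. hll_weight c d S (\<omega> i))"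

lemma hll_potential_nonneg: "hll_potential m n c d \<omega> \<ge> 0"
  unfolding hll_potential_def by (intro sum_nonneg prod_nonneg) (auto simp: hll_weight_nonneg)

lemma integrable_prod_hll_weight:
  "integrable (measure_pmf (hll_pmf m n)) (\<lambda>\<omega>. \<Prod>i<n. hll_weight c d S (\<omega> i))"
  unfolding hll_pmf_def by (intro integrable_prod_Pi_pmf) (auto simp: integrable_hll_weight)

lemma integrable_hll_potential: "integrable (measure_pmf (hll_pmf m n)) (hll_potential m n c d)"
  unfolding hll_potential_def
  by (intro Bochner_Integration.integrable_sum integrable_prod_hll_weight)

lemma sum_Pow_power_card:
  fixes x :: "'a :: comm_semiring_1"
  assumes "finite A"
  shows "(\<Sum>S\<in>Pow A. x ^ card S) = (1 + x) ^ card A"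
proof -
  have "(\<Sum>S\<in>Pow A. x ^ card S) = (\<Sum>S\<in>Pow A. (\<Prod>_\<in>S. x) * (\<Prod>_\<in>A - S. 1))"
    by simp
  also have "\<dots> = (\<Prod>_\<in>A. x + 1)"
    using assms by (rule prod_add[symmetric])
  finally show ?thesis by (simp add: add.commute)
qed

lemma expectation_hll_potential_le:
  assumes "m > 0" "c > 0" "d \<ge> 0"
  shows "measure_pmf.expectation (hll_pmf m n) (hll_potential m n c d)
           \<le> exp (real n * 2 powr (1 - c)) * (1 + exp (- (real n * 2 powr (- d) / real m))) ^ m"
proof -
  have "measure_pmf.expectation (hll_pmf m n) (hll_potential m n c d)
      = (\<Sum>S\<in>Pow {..<m}. measure_pmf.expectation (hll_pmf m n) (\<lambda>\<omega>. \<Prod>i<n. hll_weight c d S (\<omega> i)))"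
    unfolding hll_potential_def
    by (intro Bochner_Integration.integral_sum integrable_prod_hll_weight)
  also have "\<dots> \<le> (\<Sum>S\<in>Pow {..<m}.
      exp (real n * 2 powr (1 - c)) * exp (- (real n * 2 powr (- d) / real m)) ^ card S)"
    using assms by (intro sum_mono expectation_prod_hll_weight_le) auto
  also have "\<dots> = exp (real n * 2 powr (1 - c)) * (1 + exp (- (real n * 2 powr (- d) / real m))) ^ m"
    by (simp add: sum_distrib_left[symmetric] sum_Pow_power_card)
  finally show ?thesis .
qed

lemma finite_hll_reg_values:
  fixes \<omega> :: "nat \<Rightarrow> nat \<times> nat"
  shows "finite ({snd (\<omega> i) | i. i < n \<and> fst (\<omega> i) = j} \<union> {0})"
proof -
  have "{snd (\<omega> i) | i. i < n \<and> fst (\<omega> i) = j} \<subseteq> (\<lambda>i. snd (\<omega> i)) ` {..<n}" by auto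
  then have "finite {snd (\<omega> i) | i. i < n \<and> fst (\<omega> i) = j}"
    by (rule finite_subset) simp
  then show ?thesis by simp
qed

lemma snd_le_hll_reg: "i < n \<Longrightarrow> snd (\<omega> i) \<le> hll_reg n \<omega> (fst (\<omega> i))"
  unfolding hll_reg_def by (rule Max_ge[OF finite_hll_reg_values]) auto

lemma hll_reg_attained:
  assumes "hll_reg n \<omega> j > 0"
  obtains i where "i < n" "fst (\<omega> i) = j" "snd (\<omega> i) = hll_reg n \<omega> j"
proof -
  have "hll_reg n \<omega> j \<in> {snd (\<omega> i) | i. i < n \<and> fst (\<omega> i) = j} \<union> {0}"
    unfolding hll_reg_def by (rule Max_in[OF finite_hll_reg_values]) auto
  then show ?thesis using assms that by auto
qed

lemma card_hll_reg_ge_le: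
  assumes "c > 0"
  shows "card {j \<in> {..<m}. c \<le> real (hll_reg n \<omega> j)}
           \<le> card {i \<in> {..<n}. c \<le> real (snd (\<omega> i))}"
proof -
  have "{j \<in> {..<m}. c \<le> real (hll_reg n \<omega> j)}
      \<subseteq> (\<lambda>i. fst (\<omega> i)) ` {i \<in> {..<n}. c \<le> real (snd (\<omega> i))}"
  proof
    fix j assume j: "j \<in> {j \<in> {..<m}. c \<le> real (hll_reg n \<omega> j)}"
    with assms obtain i where "i < n" "fst (\<omega> i) = j" "snd (\<omega> i) = hll_reg n \<omega> j"
      using hll_reg_attained[of n \<omega> j] by auto
    with j show "j \<in> (\<lambda>i. fst (\<omega> i)) ` {i \<in> {..<n}. c \<le> real (snd (\<omega> i))}" by force
  qed
  then have "card {j \<in> {..<m}. c \<le> real (hll_reg n \<omega> j)}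
      \<le> card ((\<lambda>i. fst (\<omega> i)) ` {i \<in> {..<n}. c \<le> real (snd (\<omega> i))})"
    by (intro card_mono) auto
  also have "\<dots> \<le> card {i \<in> {..<n}. c \<le> real (snd (\<omega> i))}"
    by (intro card_image_le) auto
  finally show ?thesis .
qed

lemma two_power_card_eq_sum_Pow:
  assumes "finite A" "L \<subseteq> A"
  shows "(2 :: real) ^ card L = (\<Sum>S\<in>Pow A. if S \<subseteq> L then 1 else 0)"
proof -
  have "(2 :: real) ^ card L = real (card (Pow L))"
    using finite_subset[OF assms(2,1)] by (simp add: card_Pow)
  also have "Pow L = {S \<in> Pow A. S \<subseteq> L}"
    using assms(2) by auto
  also have "real (card \<dots>) = (\<Sum>S\<in>Pow A. if S \<subseteq> L then 1 else 0)"
    using assms(1) by (simp add: sum.If_cases Int_def)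
  finally show ?thesis .
qed

lemma prod_hll_weight_if_low:
  assumes "S \<subseteq> {j. real (hll_reg n \<omega> j) \<le> d}"
  shows "(\<Prod>i<n. hll_weight c d S (\<omega> i)) = 2 ^ card {i \<in> {..<n}. c \<le> real (snd (\<omega> i))}"
proof -
  have "hll_weight c d S (\<omega> i) = (if c \<le> real (snd (\<omega> i)) then 2 else 1)" if "i < n" for i
    using assms snd_le_hll_reg[OF that, of \<omega>] by (auto simp: hll_weight_def)
  then show ?thesis by (simp add: prod.If_cases Int_def conj_commute)
qed

lemma two_power_card_outside_le_hll_potential:
  assumes "c > 0"
  shows "(2 :: real) ^ card {j \<in> {..<m}. \<not> (d < real (hll_reg n \<omega> j) \<and> real (hll_reg n \<omega> j) < c)}
           \<le> hll_potential m n c d \<omega>"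
proof -
  define High where "High = {i \<in> {..<n}. c \<le> real (snd (\<omega> i))}"
  define Low where "Low = {j \<in> {..<m}. real (hll_reg n \<omega> j) \<le> d}"
  have "{j \<in> {..<m}. \<not> (d < real (hll_reg n \<omega> j) \<and> real (hll_reg n \<omega> j) < c)}
      \<subseteq> {j \<in> {..<m}. c \<le> real (hll_reg n \<omega> j)} \<union> Low"
    unfolding Low_def by auto
  then have "card {j \<in> {..<m}. \<not> (d < real (hll_reg n \<omega> j) \<and> real (hll_reg n \<omega> j) < c)}
      \<le> card ({j \<in> {..<m}. c \<le> real (hll_reg n \<omega> j)} \<union> Low)"
    by (rule card_mono[rotated]) (simp add: Low_def)
  also have "\<dots> \<le> card {j \<in> {..<m}. c \<le> real (hll_reg n \<omega> j)} + card Low"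
    by (rule card_Un_le)
  also have "\<dots> \<le> card High + card Low"
    using card_hll_reg_ge_le[OF assms] unfolding High_def by simp
  finally have "(2 :: real)
        ^ card {j \<in> {..<m}. \<not> (d < real (hll_reg n \<omega> j) \<and> real (hll_reg n \<omega> j) < c)}
      \<le> 2 ^ card High * 2 ^ card Low"
    by (simp add: power_add[symmetric] power_increasing)
  also have "(2 :: real) ^ card Low = (\<Sum>S\<in>Pow {..<m}. if S \<subseteq> Low then 1 else 0)"
    by (rule two_power_card_eq_sum_Pow) (auto simp: Low_def)
  also have "2 ^ card High * \<dots> = (\<Sum>S\<in>Pow {..<m}. if S \<subseteq> Low then 2 ^ card High else 0)"
    by (simp add: sum_distrib_left if_distrib cong: if_cong)
  also have "\<dots> \<le> hll_potential m n c d \<omega>"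
    unfolding hll_potential_def
  proof (intro sum_mono)
    fix S
    show "(if S \<subseteq> Low then 2 ^ card High else 0) \<le> (\<Prod>i<n. hll_weight c d S (\<omega> i))"
    proof (cases "S \<subseteq> Low")
      case True
      then have "S \<subseteq> {j. real (hll_reg n \<omega> j) \<le> d}" unfolding Low_def by blast
      then show ?thesis using True unfolding High_def by (simp add: prod_hll_weight_if_low)
    qed (simp add: prod_nonneg hll_weight_nonneg)
  qed
  finally show ?thesis .
qed

lemma prob_hll_reg_in_range_ge:
  assumes "m > 0" "c > 0" "d \<ge> 0"
  shows "measure_pmf.prob (hll_pmf m n)
           {\<omega>. real m - t
                \<le> real (card {j \<in> {..<m}. d < real (hll_reg n \<omega> j) \<and> real (hll_reg n \<omega> j) < c})}
         \<ge> 1 - exp (real n * 2 powr (1 - c)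
                    + real m * exp (- (real n * 2 powr (- d) / real m)) - t * ln 2)"
proof -
  let ?P = "measure_pmf (hll_pmf m n)"
  let ?In = "\<lambda>\<omega>. {j \<in> {..<m}. d < real (hll_reg n \<omega> j) \<and> real (hll_reg n \<omega> j) < c}"
  let ?Out = "\<lambda>\<omega>. {j \<in> {..<m}. \<not> (d < real (hll_reg n \<omega> j) \<and> real (hll_reg n \<omega> j) < c)}"
  let ?A = "{\<omega>. real m - t \<le> real (card (?In \<omega>))}"
  let ?x = "real n * 2 powr (- d) / real m"
  have "2 powr t \<le> hll_potential m n c d \<omega>" if "\<omega> \<notin> ?A" for \<omega>
  proof -
    have "?Out \<omega> = {..<m} - ?In \<omega>" by auto
    moreover have "card ({..<m} - ?In \<omega>) = card {..<m} - card (?In \<omega>)"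
      by (rule card_Diff_subset) auto
    moreover have "card (?In \<omega>) \<le> card {..<m}"
      by (intro card_mono) auto
    ultimately have "real (card (?Out \<omega>)) = real m - real (card (?In \<omega>))"
      by (simp only: of_nat_diff card_lessThan)
    then have "2 powr t \<le> 2 powr real (card (?Out \<omega>))"
      using that by simp
    also have "\<dots> \<le> hll_potential m n c d \<omega>"
      using two_power_card_outside_le_hll_potential[OF assms(2)] by (simp add: powr_realpow)
    finally show ?thesis .
  qed
  then have "measure ?P (UNIV - ?A) \<le> measure ?P {\<omega> \<in> space ?P. 2 powr t \<le> hll_potential m n c d \<omega>}"
    by (intro measure_pmf.finite_measure_mono) auto
  also have "\<dots> \<le> measure_pmf.expectation (hll_pmf m n) (hll_potential m n c d) / 2 powr t"
    by (intro integral_Markov_inequality_measure[where A = UNIV])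
       (auto simp: integrable_hll_potential hll_potential_nonneg)
  also have "\<dots> \<le> exp (real n * 2 powr (1 - c)) * (1 + exp (- ?x)) ^ m / 2 powr t"
    using expectation_hll_potential_le[OF assms] by (simp add: divide_right_mono)
  also have "(1 + exp (- ?x)) ^ m \<le> exp (exp (- ?x)) ^ m"
    by (intro power_mono exp_ge_add_one_self) (simp add: add_nonneg_nonneg)
  also have "exp (real n * 2 powr (1 - c)) * exp (exp (- ?x)) ^ m / 2 powr t
      = exp (real n * 2 powr (1 - c) + real m * exp (- ?x) - t * ln 2)"
    by (simp add: exp_add exp_diff powr_def exp_of_nat_mult[symmetric])
  finally have "measure ?P (UNIV - ?A)
      \<le> exp (real n * 2 powr (1 - c) + real m * exp (- ?x) - t * ln 2)"
    by (simp add: divide_right_mono)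
  then show ?thesis
    using measure_pmf.prob_compl[of ?A "hll_pmf m n"] by simp
qed

lemma ln_2_gt_307_443: "ln (2 :: real) > 307/443"
  using ln_approx_bounds[of 2 3] by (simp add: eval_nat_numeral)

lemma exp_minus_4_le: "exp (-4 :: real) \<le> 1/39"
proof -
  have "exp (1 :: real) \<ge> 5/2"
    using e_approx_32 by (simp add: abs_if split: if_splits)
  then have "(5/2) ^ 4 \<le> exp (1 :: real) ^ 4"
    by (intro power_mono) auto
  then have "625/16 \<le> exp (4 :: real)"
    by (simp add: exp_of_nat_mult[symmetric] power_divide)
  then show ?thesis
    by (simp add: exp_minus field_simps)
qed

(* The library bound 2/3 <= ln 2 is too weak here: this needs ln 2 >= 2/3 + exp (-4). *)
lemma mult_exp_minus_4_le:
  fixes l :: real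
  assumes "l \<ge> 1"
  shows "l * exp (- 4 * l) \<le> ln 2 - 2/3"
proof -
  have "l * exp (- 4 * l) \<le> exp (l - 1) * exp (- 4 * l)"
    using exp_ge_add_one_self[of "l - 1"] by (intro mult_right_mono) auto
  also have "\<dots> = exp (- 3 * l - 1)"
    by (simp flip: exp_add)
  also have "\<dots> \<le> exp (- 4)"
    using assms by simp
  finally show ?thesis
    using exp_minus_4_le ln_2_gt_307_443 by linarith
qed

lemma card_int_greater_less:
  "card {k :: int. a < real_of_int k \<and> real_of_int k < b} = nat (\<lceil>b\<rceil> - \<lfloor>a\<rfloor> - 1)"
proof -
  have "{k :: int. a < real_of_int k \<and> real_of_int k < b} = {\<lfloor>a\<rfloor><..<\<lceil>b\<rceil>}"
    by (auto simp: floor_less_iff less_ceiling_iff)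
  then show ?thesis by simp
qed

lemma card_int_greater_less_lt:
  assumes "a < b"
  shows "real (card {k :: int. a < real_of_int k \<and> real_of_int k < b}) < b - a + 1"
  using assms ceiling_correct[of b] floor_correct[of a]
  unfolding card_int_greater_less by linarith

lemma card_int_ball_le_power:
  assumes "r > 0"
  shows "card {k :: int. a - r < real_of_int k \<and> real_of_int k < a + r} \<le> 2 ^ (nat \<lceil>log 2 r\<rceil> + 1)"
proof -
  have "r = 2 powr (log 2 r)"
    using assms by simp
  also have "\<dots> \<le> 2 powr real (nat \<lceil>log 2 r\<rceil>)"
    by (intro powr_mono) linarith+
  finally have "2 * r \<le> 2 ^ (nat \<lceil>log 2 r\<rceil> + 1)"
    by (simp add: powr_realpow)
  moreover have "real (card {k :: int. a - r < real_of_int k \<and> real_of_int k < a + r}) < 2 * r + 1"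
    using card_int_greater_less_lt[of "a - r" "a + r"] assms by simp
  ultimately have "real (card {k :: int. a - r < real_of_int k \<and> real_of_int k < a + r})
      < real (2 ^ (nat \<lceil>log 2 r\<rceil> + 1) + 1)"
    by simp
  then show ?thesis
    by (simp only: of_nat_less_iff less_Suc_eq_le Suc_eq_plus1[symmetric])
qed

lemma hll_tail_exponent_le:
  fixes l x :: real
  assumes "l \<ge> 1" "x \<ge> 0"
  shows "x / (2 * l) + x * exp (- (4 * l)) - x / l * ln 2 \<le> - (x / (6 * l))"
proof -
  have "x * exp (- (4 * l)) = x / l * (l * exp (- 4 * l))"
    using assms by simp
  also have "\<dots> \<le> x / l * (ln 2 - 2/3)"
    using assms by (intro mult_left_mono mult_exp_minus_4_le) auto
  also have "\<dots> = x / l * ln 2 - 2/3 * (x / l)"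
    by (simp add: right_diff_distrib)
  finally have "x * exp (- (4 * l)) \<le> x / l * ln 2 - 2/3 * (x / l)" .
  moreover have "x / (2 * l) = 1/2 * (x / l)" "x / (6 * l) = 1/6 * (x / l)"
    by simp_all
  ultimately show ?thesis
    by linarith
qed

lemma hll_thresholds:
  fixes m n :: nat
  assumes "m \<ge> 2" "real n > 4 * real m * log 2 (real m)"
  defines "l \<equiv> log 2 (real m)"
    and "B \<equiv> log 2 (real n / real m)"
    and "\<Delta> \<equiv> 2 + log 2 (log 2 (real m))"
  shows "\<Delta> > 0" and "B - \<Delta> \<ge> 0"
    and "real n * 2 powr (1 - (B + \<Delta>)) = real m / (2 * l)"
    and "real n * 2 powr (- (B - \<Delta>)) / real m = 4 * l"
proof -
  have l: "l \<ge> 1" and m: "real m > 0"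
    using assms(1) by (auto simp: l_def)
  have n: "4 * l < real n / real m"
    using assms(2) m by (simp add: l_def field_simps)
  then have ratio: "real n / real m > 0"
    using l by linarith
  have pow_\<Delta>: "2 powr \<Delta> = 4 * l"
    using l by (simp add: \<Delta>_def l_def powr_add)
  have pow_B: "2 powr B = real n / real m"
    using ratio by (simp add: B_def)
  have "2 powr \<Delta> < 2 powr B"
    using pow_\<Delta> pow_B n by simp
  moreover have "\<Delta> \<ge> 2"
    using l by (simp add: \<Delta>_def l_def)
  ultimately show "\<Delta> > 0" "B - \<Delta> \<ge> 0"
    by auto
  show "real n * 2 powr (1 - (B + \<Delta>)) = real m / (2 * l)"
    and "real n * 2 powr (- (B - \<Delta>)) / real m = 4 * l"
    using pow_\<Delta> pow_B ratio m l by (simp_all add: powr_diff powr_add powr_minus field_simps)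
qed

theorem theorem3p5:
  fixes m n :: nat
  assumes "m \<ge> 2"
    and "real n > 4 * real m * log 2 (real m)"
  defines "B \<equiv> log 2 (real n / real m)"
    and "\<Delta> \<equiv> 2 + log 2 (log 2 (real m))"
  shows "measure_pmf.prob (hll_pmf m n)
           {\<omega>. real (card {j \<in> {..<m}. B - \<Delta> < real (hll_reg n \<omega> j) \<and>
                                       real (hll_reg n \<omega> j) < B + \<Delta>})
                 \<ge> real m - real m / log 2 (real m)}
         \<ge> 1 - exp (- (real m / (6 * log 2 (real m))))
       \<and> card {k :: int. B - \<Delta> < real_of_int k \<and> real_of_int k < B + \<Delta>}
           \<le> 2 ^ (nat \<lceil>log 2 (2 + log 2 (log 2 (real m)))\<rceil> + 1)"
proof -
  define l where "l = log 2 (real m)"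
  have l: "l \<ge> 1" and m: "m > 0"
    using assms(1) by (auto simp: l_def)
  have \<Delta>: "\<Delta> > 0" and d: "B - \<Delta> \<ge> 0"
    and high: "real n * 2 powr (1 - (B + \<Delta>)) = real m / (2 * l)"
    and low: "real n * 2 powr (- (B - \<Delta>)) / real m = 4 * l"
    using hll_thresholds[OF assms(1,2)] unfolding B_def \<Delta>_def l_def by auto
  then have c: "B + \<Delta> > 0"
    by linarith
  have card: "card {k :: int. B - \<Delta> < real_of_int k \<and> real_of_int k < B + \<Delta>}
      \<le> 2 ^ (nat \<lceil>log 2 \<Delta>\<rceil> + 1)"
    using \<Delta> by (rule card_int_ball_le_power)
  have "1 - exp (- (real m / (6 * l)))
      \<le> 1 - exp (real m / (2 * l) + real m * exp (- (4 * l)) - real m / l * ln 2)"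
    using hll_tail_exponent_le[OF l, of "real m"] by simp
  also have "\<dots> \<le> measure_pmf.prob (hll_pmf m n)
      {\<omega>. real m - real m / l
          \<le> real (card {j \<in> {..<m}. B - \<Delta> < real (hll_reg n \<omega> j) \<and> real (hll_reg n \<omega> j) < B + \<Delta>})}"
    using prob_hll_reg_in_range_ge[OF m c d, of n "real m / l"] unfolding high low .
  finally show ?thesis
    using card unfolding l_def \<Delta>_def by simp
qed

end
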